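(* Let $1\le k<n$ and consider the Burnside process on $[k]^n$, with stationary distribution $$\pi(u)=\frac{(k-j_u)!}{k!\sum_{i=1}^k \left\{ {n \atop i} \right\}},$$ where $j_u$ is the number of distinct entries of $u$. Then for every $\epsilon\in(0,1)$ its mixing time satisfies $$t_{\mathrm{mix}}(\epsilon)\le\left\lceil (k-1)!\,\log\left(\epsilon^{-1}\right)\right\rceil.$$
   Context: $S_k$ acts on $[k]^n$ by $\sigma(u_1,\dots,u_n)=(\sigma(u_1),\dots,\sigma(u_n))$. The Burnside process on $[k]^n$ is the Markov chain which, from $u$, chooses $\sigma$ uniformly among permutations of $[k]$ fixing every value appearing in $u$, then produces $v\in[k]^n$ by choosing each coordinate independently and uniformly among the fixed points of $\sigma$. $\left\{ {n \atop i} \right\}$ is the Stirling number of the second kind. $t_{\mathrm{mix}}(\epsilon)=\min\{t:\max_u\|K^t(u,\cdot)-\pi\|_{TV}\le\epsilon\}$ with $\|\mu-\nu\|_{TV}=\frac12\sum|\mu-\nu|$. *)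

theory Defs
  imports "HOL-Analysis.Analysis" "HOL-Combinatorics.Combinatorics"
begin

definition states :: "nat \<Rightarrow> nat \<Rightarrow> nat list set" where
  "states k n = {u. length u = n \<and> set u \<subseteq> {1..k}}"

definition stab :: "nat \<Rightarrow> nat list \<Rightarrow> (nat \<Rightarrow> nat) set" where
  "stab k u = {\<sigma>. \<sigma> permutes {1..k} \<and> (\<forall>x\<in>set u. \<sigma> x = x)}"

definition fixpts :: "nat \<Rightarrow> (nat \<Rightarrow> nat) \<Rightarrow> nat set" where
  "fixpts k \<sigma> = {x\<in>{1..k}. \<sigma> x = x}"

definition burnside_K :: "nat \<Rightarrow> nat \<Rightarrow> nat list \<Rightarrow> nat list \<Rightarrow> real" where
  "burnside_K k n u v =
     (if u \<in> states k n \<and> v \<in> states k n then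
        (\<Sum>\<sigma>\<in>stab k u. (1 / real (card (stab k u))) *
            (if set v \<subseteq> fixpts k \<sigma> then (1 / real (card (fixpts k \<sigma>))) ^ n else 0))
      else 0)"

fun burnside_Kpow :: "nat \<Rightarrow> nat \<Rightarrow> nat \<Rightarrow> nat list \<Rightarrow> nat list \<Rightarrow> real" where
  "burnside_Kpow k n 0 u v = (if u = v then 1 else 0)"
| "burnside_Kpow k n (Suc t) u v =
     (\<Sum>w\<in>states k n. burnside_Kpow k n t u w * burnside_K k n w v)"

definition burnside_pi :: "nat \<Rightarrow> nat \<Rightarrow> nat list \<Rightarrow> real" where
  "burnside_pi k n u =
     real (fact (k - card (set u))) / (real (fact k) * real (\<Sum>i=1..k. Stirling n i))"

definition tv_dist :: "nat \<Rightarrow> nat \<Rightarrow> nat \<Rightarrow> nat list \<Rightarrow> real" where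
  "tv_dist k n t u = (1/2) * (\<Sum>v\<in>states k n. \<bar>burnside_Kpow k n t u v - burnside_pi k n v\<bar>)"

definition tmix :: "nat \<Rightarrow> nat \<Rightarrow> real \<Rightarrow> nat" where
  "tmix k n \<epsilon> = (LEAST t. Max ((\<lambda>u. tv_dist k n t u) ` states k n) \<le> \<epsilon>)"

end

theory Submission
  imports Defs
begin

(*
  The Burnside kernel is reversible for pi: up to the normalising constant, pi(u) K(u,v) is the
  sum of (1 / |Fix sigma|)^n over the permutations sigma fixing every value of both u and v.
  Since the identity lies in the stabiliser of u and |Stab u| = (k - j_u)! <= (k - 1)!, every
  entry satisfies K(u,v) >= 1 / ((k - 1)! k^n), i.e. K dominates 1/(k - 1)! times the uniform
  distribution.  Doeblin's coupling argument then shrinks the L1 distance to pi by the factor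
  1 - 1/(k - 1)! in every step, and (1 - 1/F)^t <= exp (-t/F) <= eps once t >= F log (1/eps).
  That pi is a probability distribution comes from counting words by their number j of distinct
  letters: exactly S(n,j) k (k - 1) ... (k - j + 1) words of length n use j letters.
*)

lemma doeblin_contraction:
  fixes K :: "'a \<Rightarrow> 'a \<Rightarrow> real" and f :: "'a \<Rightarrow> real"
  assumes "finite S"
    and row_sum: "\<And>w. w \<in> S \<Longrightarrow> (\<Sum>v\<in>S. K w v) = 1"
    and minorized: "\<And>w v. w \<in> S \<Longrightarrow> v \<in> S \<Longrightarrow> m \<le> K w v"
    and "(\<Sum>w\<in>S. f w) = 0"
  shows "(\<Sum>v\<in>S. \<bar>\<Sum>w\<in>S. f w * K w v\<bar>) \<le> (1 - m * card S) * (\<Sum>w\<in>S. \<bar>f w\<bar>)"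
proof -
  \<comment> \<open>As f sums to zero, K may be replaced by the nonnegative kernel K - m.\<close>
  have "(\<Sum>v\<in>S. \<bar>\<Sum>w\<in>S. f w * K w v\<bar>) = (\<Sum>v\<in>S. \<bar>\<Sum>w\<in>S. f w * (K w v - m)\<bar>)"
    using assms(4) by (simp add: right_diff_distrib sum_subtractf flip: sum_distrib_right)
  also have "\<dots> \<le> (\<Sum>v\<in>S. \<Sum>w\<in>S. \<bar>f w\<bar> * (K w v - m))"
    by (intro sum_mono order.trans[OF sum_abs] eq_refl sum.cong)
       (use minorized in \<open>auto simp: abs_mult\<close>)
  also have "\<dots> = (\<Sum>w\<in>S. \<bar>f w\<bar> * ((\<Sum>v\<in>S. K w v) - m * card S))"
    by (subst sum.swap) (simp add: sum_distrib_left sum_subtractf right_diff_distrib mult_ac)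
  also have "\<dots> = (1 - m * card S) * (\<Sum>w\<in>S. \<bar>f w\<bar>)"
    using row_sum by (simp add: sum_distrib_right mult.commute)
  finally show ?thesis .
qed

lemma power_one_minus_inverse_le:
  fixes F \<epsilon> :: real
  assumes "1 \<le> F" "0 < \<epsilon>" "\<epsilon> \<le> 1"
  shows "(1 - 1 / F) ^ nat \<lceil>F * ln (1 / \<epsilon>)\<rceil> \<le> \<epsilon>"
proof -
  define T where "T = nat \<lceil>F * ln (1 / \<epsilon>)\<rceil>"
  have "F * ln (1 / \<epsilon>) \<le> T"
    unfolding T_def by linarith
  then have "ln (1 / \<epsilon>) \<le> T / F"
    using assms(1) by (simp add: field_simps)
  have "(1 - 1 / F) ^ T \<le> exp (- (1 / F)) ^ T"
    using assms(1) exp_ge_add_one_self[of "- (1 / F)"] by (intro power_mono) auto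
  also have "\<dots> = exp (- (T / F))"
    by (simp flip: exp_of_nat_mult)
  also have "\<dots> \<le> exp (- ln (1 / \<epsilon>))"
    using \<open>ln (1 / \<epsilon>) \<le> T / F\<close> by simp
  also have "\<dots> = \<epsilon>"
    using assms(2) by (simp add: ln_div)
  finally show ?thesis unfolding T_def .
qed

lemma detailed_balance_imp_stationary:
  fixes K :: "'a \<Rightarrow> 'a \<Rightarrow> real"
  assumes row_sum: "\<And>w. w \<in> S \<Longrightarrow> (\<Sum>v\<in>S. K w v) = 1"
    and balance: "\<And>u v. u \<in> S \<Longrightarrow> v \<in> S \<Longrightarrow> p u * K u v = p v * K v u"
    and "v \<in> S"
  shows "(\<Sum>u\<in>S. p u * K u v) = p v"
proof -
  have "(\<Sum>u\<in>S. p u * K u v) = (\<Sum>u\<in>S. p v * K v u)"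
    using balance \<open>v \<in> S\<close> by (intro sum.cong) auto
  also have "\<dots> = p v"
    using row_sum[OF \<open>v \<in> S\<close>] by (simp flip: sum_distrib_left)
  finally show ?thesis .
qed

definition falling_fact :: "nat \<Rightarrow> nat \<Rightarrow> nat" where
  "falling_fact k j = (\<Prod>i<j. k - i)"

lemma falling_fact_Suc: "falling_fact k (Suc j) = falling_fact k j * (k - j)"
  by (simp add: falling_fact_def)

lemma falling_fact_mult_fact: "j \<le> k \<Longrightarrow> falling_fact k j * fact (k - j) = fact k"
proof (induction j)
  case 0
  then show ?case by (simp add: falling_fact_def)
next
  case (Suc j)
  then have "k - j = Suc (k - Suc j)"
    by simp
  then have "fact (k - j) = (k - j) * fact (k - Suc j)"
    by simp
  with Suc show ?case
    by (simp add: falling_fact_Suc mult_ac)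
qed

lemma sum_extend_word_by_card_set:
  fixes h :: "nat \<Rightarrow> real"
  assumes "finite A" "set u \<subseteq> A"
  shows "(\<Sum>x\<in>A. h (card (set (x # u)))) =
     real (card (set u)) * h (card (set u)) + real (card A - card (set u)) * h (Suc (card (set u)))"
proof -
  have "(\<Sum>x\<in>A. h (card (set (x # u)))) =
      (\<Sum>x\<in>A - set u. h (card (set (x # u)))) + (\<Sum>x\<in>set u. h (card (set (x # u))))"
    by (rule sum.subset_diff[OF assms(2,1)])
  also have "(\<Sum>x\<in>A - set u. h (card (set (x # u)))) = real (card A - card (set u)) * h (Suc (card (set u)))"
    using assms by (simp add: card_Diff_subset)
  also have "(\<Sum>x\<in>set u. h (card (set (x # u)))) = real (card (set u)) * h (card (set u))"
    by (simp add: insert_absorb)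
  finally show ?thesis by simp
qed

lemma sum_Stirling_Suc_falling_fact:
  fixes h :: "nat \<Rightarrow> real"
  shows "(\<Sum>j\<le>k. real (Stirling n j) * real (falling_fact k j) * (real j * h j + real (k - j) * h (Suc j))) =
     (\<Sum>j\<le>k. real (Stirling (Suc n) j) * real (falling_fact k j) * h j)"
proof (cases k)
  case 0
  then show ?thesis by simp
next
  case (Suc m)
  have new_letter: "(\<Sum>j\<le>k. real (Stirling n j) * real (falling_fact k j) * (real j * h j)) =
     (\<Sum>i\<le>m. real (Suc i) * real (Stirling n (Suc i)) * real (falling_fact k (Suc i)) * h (Suc i))"
    unfolding Suc by (subst sum.atMost_Suc_shift) (simp add: mult_ac)
  have old_letter: "(\<Sum>j\<le>k. real (Stirling n j) * real (falling_fact k j) * (real (k - j) * h (Suc j))) =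
     (\<Sum>i\<le>m. real (Stirling n i) * real (falling_fact k (Suc i)) * h (Suc i))"
    unfolding Suc by (subst sum.atMost_Suc) (simp add: falling_fact_Suc mult_ac)
  have "(\<Sum>j\<le>k. real (Stirling n j) * real (falling_fact k j) * (real j * h j + real (k - j) * h (Suc j))) =
     (\<Sum>j\<le>k. real (Stirling n j) * real (falling_fact k j) * (real j * h j)) +
     (\<Sum>j\<le>k. real (Stirling n j) * real (falling_fact k j) * (real (k - j) * h (Suc j)))"
    by (simp only: distrib_left sum.distrib)
  also have "\<dots> = (\<Sum>i\<le>m. real (Stirling (Suc n) (Suc i)) * real (falling_fact k (Suc i)) * h (Suc i))"
    unfolding new_letter old_letter sum.distrib[symmetric] by (intro sum.cong) (simp_all add: algebra_simps)
  also have "\<dots> = (\<Sum>j\<le>k. real (Stirling (Suc n) j) * real (falling_fact k j) * h j)"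
    unfolding Suc by (simp only: sum.atMost_Suc_shift) simp
  finally show ?thesis .
qed

lemma sum_words_by_card_set:
  fixes h :: "nat \<Rightarrow> real"
  assumes "finite A"
  shows "(\<Sum>u\<in>{xs. set xs \<subseteq> A \<and> length xs = n}. h (card (set u))) =
     (\<Sum>j\<le>card A. real (Stirling n j) * real (falling_fact (card A) j) * h j)"
proof (induction n arbitrary: h)
  case 0
  have "(\<Sum>j\<le>card A. real (Stirling 0 j) * real (falling_fact (card A) j) * h j) = h 0"
    by (subst sum.atMost_shift) (simp_all add: falling_fact_def)
  moreover have "{xs. set xs \<subseteq> A \<and> length xs = 0} = {[]}"
    by auto
  ultimately show ?case by simp
next
  case (Suc n)
  let ?W = "\<lambda>n. {xs. set xs \<subseteq> A \<and> length xs = n}"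
  have "(\<Sum>u\<in>?W (Suc n). h (card (set u))) = (\<Sum>(u, x)\<in>?W n \<times> A. h (card (set (x # u))))"
    unfolding lists_length_Suc_eq by (subst sum.reindex[OF inj_split_Cons]) (simp add: comp_def split_def)
  also have "\<dots> = (\<Sum>u\<in>?W n. \<Sum>x\<in>A. h (card (set (x # u))))"
    by (rule sum.cartesian_product[symmetric])
  also have "\<dots> = (\<Sum>u\<in>?W n. real (card (set u)) * h (card (set u))
      + real (card A - card (set u)) * h (Suc (card (set u))))"
    by (rule sum.cong[OF refl], rule sum_extend_word_by_card_set) (use assms in auto)
  also have "\<dots> = (\<Sum>j\<le>card A. real (Stirling (Suc n) j) * real (falling_fact (card A) j) * h j)"
    by (subst Suc.IH) (rule sum_Stirling_Suc_falling_fact)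
  finally show ?case .
qed

lemma states_eq_lists: "states k n = {xs. set xs \<subseteq> {1..k} \<and> length xs = n}"
  unfolding states_def by auto

lemma finite_states: "finite (states k n)"
  by (simp add: states_eq_lists finite_lists_length_eq)

lemma card_states: "card (states k n) = k ^ n"
  by (simp add: states_eq_lists card_lists_length_eq)

lemma replicate_in_states: "1 \<le> k \<Longrightarrow> replicate n 1 \<in> states k n"
  by (auto simp: states_def)

lemma set_state_nonempty: "u \<in> states k n \<Longrightarrow> 1 \<le> n \<Longrightarrow> set u \<noteq> {}"
  by (auto simp: states_def)

lemma sum_fact_states:
  assumes "1 \<le> n"
  shows "(\<Sum>u\<in>states k n. real (fact (k - card (set u)))) = fact k * real (\<Sum>i=1..k. Stirling n i)"
proof -
  have "(\<Sum>u\<in>states k n. real (fact (k - card (set u)))) =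
      (\<Sum>j\<le>k. real (Stirling n j) * real (falling_fact k j) * fact (k - j))"
    using sum_words_by_card_set[of "{1..k}"] by (simp add: states_eq_lists)
  also have "\<dots> = (\<Sum>j\<le>k. real (Stirling n j) * fact k)"
  proof (intro sum.cong refl)
    fix j assume "j \<in> {..k}"
    then have "real (falling_fact k j) * fact (k - j) = fact k"
      using falling_fact_mult_fact[of j k] by (metis atMost_iff of_nat_fact of_nat_mult)
    then show "real (Stirling n j) * real (falling_fact k j) * fact (k - j) = real (Stirling n j) * fact k"
      by (simp add: mult.assoc)
  qed
  also have "\<dots> = (\<Sum>j=1..k. real (Stirling n j) * fact k)"
    using assms by (cases n) (simp_all add: atMost_atLeast0 sum.atLeast_Suc_atMost)
  finally show ?thesis
    by (simp add: sum_distrib_left mult.commute)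
qed

lemma burnside_pi_nonneg: "0 \<le> burnside_pi k n u"
  unfolding burnside_pi_def by (intro divide_nonneg_nonneg mult_nonneg_nonneg of_nat_0_le_iff)

lemma sum_burnside_pi:
  assumes "1 \<le> k" "1 \<le> n"
  shows "(\<Sum>u\<in>states k n. burnside_pi k n u) = 1"
proof -
  have "Stirling n 1 = 1"
    using assms(2) Stirling_1 by (metis One_nat_def Suc_le_D)
  moreover have "Stirling n 1 \<le> (\<Sum>i=1..k. Stirling n i)"
    using assms(1) by (intro member_le_sum) auto
  ultimately have "(\<Sum>i=1..k. Stirling n i) \<noteq> 0"
    by linarith
  then have "(\<Sum>i=1..k. real (Stirling n i)) \<noteq> 0"
    by (metis of_nat_0_eq_iff of_nat_sum)
  then show ?thesis
    using sum_fact_states[OF assms(2)]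
    by (simp add: burnside_pi_def flip: sum_divide_distrib)
qed

lemma stab_eq_permutations:
  assumes "set u \<subseteq> {1..k}"
  shows "stab k u = {\<sigma>. \<sigma> permutes ({1..k} - set u)}"
  using assms unfolding stab_def permutes_def by blast

lemma card_stab: "set u \<subseteq> {1..k} \<Longrightarrow> card (stab k u) = fact (k - card (set u))"
  by (simp add: stab_eq_permutations card_permutations card_Diff_subset)

lemma finite_stab: "set u \<subseteq> {1..k} \<Longrightarrow> finite (stab k u)"
  by (simp add: stab_eq_permutations finite_permutations)

lemma stab_eq_fixpts: "set u \<subseteq> {1..k} \<Longrightarrow> stab k u = {\<sigma>. \<sigma> permutes {1..k} \<and> set u \<subseteq> fixpts k \<sigma>}"
  unfolding stab_def fixpts_def by auto

definition fixpts_word_prob :: "nat \<Rightarrow> nat \<Rightarrow> (nat \<Rightarrow> nat) \<Rightarrow> nat list \<Rightarrow> real" where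
  "fixpts_word_prob k n \<sigma> v = (if set v \<subseteq> fixpts k \<sigma> then (1 / card (fixpts k \<sigma>)) ^ n else 0)"

lemma burnside_K_eq:
  "u \<in> states k n \<Longrightarrow> v \<in> states k n \<Longrightarrow>
   burnside_K k n u v = (\<Sum>\<sigma>\<in>stab k u. fixpts_word_prob k n \<sigma> v) / card (stab k u)"
  unfolding burnside_K_def fixpts_word_prob_def by (simp add: sum_divide_distrib)

lemma sum_fixpts_word_prob:
  assumes "fixpts k \<sigma> \<noteq> {}"
  shows "(\<Sum>v\<in>states k n. fixpts_word_prob k n \<sigma> v) = 1"
proof -
  let ?F = "fixpts k \<sigma>"
  have "?F \<subseteq> {1..k}" "finite ?F"
    by (auto simp: fixpts_def)
  then have "{v \<in> states k n. set v \<subseteq> ?F} = {xs. set xs \<subseteq> ?F \<and> length xs = n}"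
    by (auto simp: states_def)
  then have "(\<Sum>v\<in>states k n. fixpts_word_prob k n \<sigma> v) = card ?F ^ n * (1 / card ?F) ^ n"
    using \<open>finite ?F\<close>
    by (simp add: fixpts_word_prob_def sum.If_cases finite_states card_lists_length_eq Int_def)
  then show ?thesis
    using \<open>finite ?F\<close> assms by (simp add: power_one_over)
qed

lemma burnside_K_row_sum:
  assumes "u \<in> states k n" "1 \<le> n"
  shows "(\<Sum>v\<in>states k n. burnside_K k n u v) = 1"
proof -
  have u: "set u \<subseteq> {1..k}"
    using assms(1) by (simp add: states_def)
  have "(\<Sum>v\<in>states k n. burnside_K k n u v) =
      (\<Sum>\<sigma>\<in>stab k u. \<Sum>v\<in>states k n. fixpts_word_prob k n \<sigma> v) / card (stab k u)"
    using assms(1) by (simp add: burnside_K_eq sum_divide_distrib[symmetric] sum.swap[of _ "stab k u"])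
  also have "\<dots> = (\<Sum>\<sigma>\<in>stab k u. 1) / card (stab k u)"
    using set_state_nonempty[OF assms] by (intro arg_cong2[where f = "(/)"] sum.cong refl sum_fixpts_word_prob)
       (auto simp: stab_eq_fixpts[OF u])
  also have "\<dots> = 1"
    using card_stab[OF u] by simp
  finally show ?thesis .
qed

lemma burnside_detailed_balance:
  assumes "u \<in> states k n" "v \<in> states k n"
  shows "burnside_pi k n u * burnside_K k n u v = burnside_pi k n v * burnside_K k n v u"
proof -
  let ?Z = "real (fact k) * real (\<Sum>i=1..k. Stirling n i)"
  \<comment> \<open>The weight (k - j_u)! of pi cancels against |Stab u|, leaving a sum symmetric in u and v.\<close>
  define common where "common u v = (\<Sum>\<sigma> | \<sigma> permutes {1..k} \<and> set u \<subseteq> fixpts k \<sigma> \<and> set v \<subseteq> fixpts k \<sigma>.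
      (1 / real (card (fixpts k \<sigma>))) ^ n)" for u v
  have "burnside_pi k n u * burnside_K k n u v = common u v / ?Z"
    if "u \<in> states k n" "v \<in> states k n" for u v
  proof -
    have u: "set u \<subseteq> {1..k}"
      using that(1) by (simp add: states_def)
    have "(\<Sum>\<sigma>\<in>stab k u. fixpts_word_prob k n \<sigma> v) = common u v"
      unfolding stab_eq_fixpts[OF u] common_def fixpts_word_prob_def
      by (simp add: sum.If_cases finite_permutations Int_def conj_assoc)
    then show ?thesis
      using that card_stab[OF u] by (simp add: burnside_K_eq burnside_pi_def)
  qed
  moreover have "common u v = common v u"
    unfolding common_def by (simp add: conj_commute conj_left_commute)
  ultimately show ?thesis
    using assms by simp
qed

lemma burnside_K_lower_bound:
  assumes "u \<in> states k n" "v \<in> states k n" "1 \<le> n" "1 \<le> k"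
  shows "1 / (fact (k - 1) * real k ^ n) \<le> burnside_K k n u v"
proof -
  have u: "set u \<subseteq> {1..k}" and v: "set v \<subseteq> {1..k}"
    using assms(1,2) by (simp_all add: states_def)
  have "fixpts k id = {1..k}"
    by (auto simp: fixpts_def)
  then have "1 / real k ^ n = fixpts_word_prob k n id v"
    using v by (simp add: fixpts_word_prob_def power_one_over)
  also have "\<dots> \<le> (\<Sum>\<sigma>\<in>stab k u. fixpts_word_prob k n \<sigma> v)"
    using finite_stab[OF u] by (intro member_le_sum) (auto simp: stab_def fixpts_word_prob_def permutes_id[unfolded id_def])
  finally have sum_ge: "1 / real k ^ n \<le> (\<Sum>\<sigma>\<in>stab k u. fixpts_word_prob k n \<sigma> v)" .
  have "0 < card (set u)"
    using set_state_nonempty[OF assms(1,3)] by (simp add: card_gt_0_iff)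
  then have "card (stab k u) \<le> fact (k - 1)"
    unfolding card_stab[OF u] by (intro fact_mono) simp
  then have "real (card (stab k u)) \<le> fact (k - 1)"
    by (metis of_nat_fact of_nat_le_iff)
  moreover have "0 < card (stab k u)"
    by (simp add: card_stab[OF u])
  ultimately have stab_ge: "1 / fact (k - 1) \<le> 1 / real (card (stab k u))"
    by (intro divide_left_mono) simp_all
  have "1 / (fact (k - 1) * real k ^ n) = 1 / fact (k - 1) * (1 / real k ^ n)"
    by simp
  also have "\<dots> \<le> 1 / real (card (stab k u)) * (\<Sum>\<sigma>\<in>stab k u. fixpts_word_prob k n \<sigma> v)"
    using stab_ge sum_ge by (rule mult_mono) simp_all
  also have "\<dots> = burnside_K k n u v"
    using assms(1,2) by (simp add: burnside_K_eq)
  finally show ?thesis .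
qed

lemma burnside_pi_stationary:
  "v \<in> states k n \<Longrightarrow> 1 \<le> n \<Longrightarrow>
   (\<Sum>u\<in>states k n. burnside_pi k n u * burnside_K k n u v) = burnside_pi k n v"
  by (rule detailed_balance_imp_stationary) (auto intro: burnside_K_row_sum burnside_detailed_balance)

lemma burnside_Kpow_row_sum:
  assumes "u \<in> states k n" "1 \<le> n"
  shows "(\<Sum>v\<in>states k n. burnside_Kpow k n t u v) = 1"
proof (induction t)
  case 0
  then show ?case
    using assms by (simp add: finite_states)
next
  case (Suc t)
  have "(\<Sum>v\<in>states k n. burnside_Kpow k n (Suc t) u v) =
      (\<Sum>w\<in>states k n. burnside_Kpow k n t u w * (\<Sum>v\<in>states k n. burnside_K k n w v))"
    unfolding burnside_Kpow.simps sum_distrib_left by (rule sum.swap)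
  also have "\<dots> = 1"
    using Suc burnside_K_row_sum[OF _ assms(2)] by simp
  finally show ?case .
qed

lemma burnside_Kpow_Suc_minus_pi:
  assumes "v \<in> states k n" "1 \<le> n"
  shows "burnside_Kpow k n (Suc t) u v - burnside_pi k n v =
    (\<Sum>w\<in>states k n. (burnside_Kpow k n t u w - burnside_pi k n w) * burnside_K k n w v)"
  using burnside_pi_stationary[OF assms] by (simp add: left_diff_distrib sum_subtractf)

lemma tv_dist_le:
  assumes "u \<in> states k n" "1 \<le> n" "1 \<le> k"
  shows "tv_dist k n t u \<le> (1 - 1 / fact (k - 1)) ^ t"
proof -
  define q :: real where "q = 1 - 1 / fact (k - 1)"
  define D where "D t = (\<Sum>v\<in>states k n. \<bar>burnside_Kpow k n t u v - burnside_pi k n v\<bar>)" for t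
  have "D t \<le> 2 * q ^ t"
  proof (induction t)
    case 0
    have "D 0 \<le> (\<Sum>v\<in>states k n. burnside_Kpow k n 0 u v + burnside_pi k n v)"
      unfolding D_def by (intro sum_mono order.trans[OF abs_triangle_ineq4]) (simp add: burnside_pi_nonneg)
    also have "\<dots> = 2"
      using sum_burnside_pi[OF assms(3,2)] assms(1) by (simp add: sum.distrib finite_states)
    finally show ?case by simp
  next
    case (Suc t)
    define f where "f w = burnside_Kpow k n t u w - burnside_pi k n w" for w
    have "D (Suc t) = (\<Sum>v\<in>states k n. \<bar>\<Sum>w\<in>states k n. f w * burnside_K k n w v\<bar>)"
      unfolding D_def f_def using assms(2)
      by (intro sum.cong refl arg_cong[where f = abs] burnside_Kpow_Suc_minus_pi)
    also have "\<dots> \<le> (1 - 1 / (fact (k - 1) * real k ^ n) * card (states k n)) * (\<Sum>w\<in>states k n. \<bar>f w\<bar>)"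
    proof (rule doeblin_contraction[OF finite_states])
      show "(\<Sum>w\<in>states k n. f w) = 0"
        using burnside_Kpow_row_sum[OF assms(1,2)] sum_burnside_pi[OF assms(3,2)]
        by (simp add: f_def sum_subtractf)
    qed (use assms burnside_K_row_sum burnside_K_lower_bound in auto)
    also have "\<dots> = q * D t"
      using assms(3) by (simp add: card_states q_def D_def f_def)
    also have "\<dots> \<le> q * (2 * q ^ t)"
      using Suc by (intro mult_left_mono) (auto simp: q_def)
    finally show ?case by simp
  qed
  then show ?thesis
    unfolding tv_dist_def D_def q_def by simp
qed

lemma tmix_le:
  assumes "1 \<le> k" "\<And>u. u \<in> states k n \<Longrightarrow> tv_dist k n t u \<le> \<epsilon>"
  shows "tmix k n \<epsilon> \<le> t"
  unfolding tmix_def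
proof (rule Least_le)
  have "states k n \<noteq> {}"
    using replicate_in_states[OF assms(1)] by blast
  then show "Max ((\<lambda>u. tv_dist k n t u) ` states k n) \<le> \<epsilon>"
    using assms(2) by (simp add: finite_states)
qed

theorem theorem4p5:
  fixes k n :: nat and \<epsilon> :: real
  assumes "1 \<le> k" and "k < n" and "0 < \<epsilon>" and "\<epsilon> < 1"
  shows "real (tmix k n \<epsilon>) \<le> of_int \<lceil>real (fact (k - 1)) * ln (1 / \<epsilon>)\<rceil>"
proof -
  define T where "T = nat \<lceil>real (fact (k - 1)) * ln (1 / \<epsilon>)\<rceil>"
  have "tv_dist k n T u \<le> \<epsilon>" if "u \<in> states k n" for u
    using tv_dist_le[OF that _ assms(1), of T] assms power_one_minus_inverse_le[of "fact (k - 1)" \<epsilon>]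
    by (simp add: T_def)
  then have "tmix k n \<epsilon> \<le> T"
    by (rule tmix_le[OF assms(1)])
  moreover have "0 \<le> real (fact (k - 1)) * ln (1 / \<epsilon>)"
    using assms(3,4) by simp
  ultimately show ?thesis
    unfolding T_def by linarith
qed

end
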